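(* For every language $L$, $Q^{1}_L\mathrm{FO}(+,\times)\equiv Q^{\star}_L\mathrm{FO}(+,\times)$.
   Context: Strings as structures: a nonempty string $b_0\cdots b_{n-1}$ over the ordered alphabet $(a_1,\dots,a_s)$ is the structure with universe $\{0,\dots,n-1\}$, natural order $<$, and unary predicates $P_{a_i}=\{j:b_j=a_i\}$. FO uses $=$, $<$, these predicates, $\min,\max$, connectives, $\exists,\forall$; "$+,\times$" means the ternary relations $i+j=k$ and $i\cdot j=k$ are additionally built in. Monadic second-order Lindström quantifiers: for a language $L$ over $(a_1,\dots,a_s)$ and distinct unary second-order variables $\overline X=(X_1,\dots,X_k)$, over universe $\{0,\dots,n-1\}$ and an assignment $(A_1,\dots,A_k)$ let $s^i_j=1$ iff $j\in A_i$. For $Q^1_L$ the $2^{nk}$ assignments are ordered lexicographically by the interleaved code $s^1_0\cdots s^k_0s^1_1\cdots s^k_1\cdots s^1_{n-1}\cdots s^k_{n-1}$; for $Q^\star_L$ by the concatenated code $s^1_0\cdots s^1_{n-1}\cdots s^k_0\cdots s^k_{n-1}$. Then $\mathcal A\models Q\overline X[\varphi_1,\dots,\varphi_{s-1}]$ iff the word of length $2^{nk}$ whose $i$-th letter is $a_j$ for the least $j$ with $\varphi_j$ true at the $i$-th assignment (and $a_s$ if none) lies in $L$. $Q^1_L\mathrm{FO}(+,\times)$ consists of all formulas $Q^1_L\overline X[\varphi_1,\dots,\varphi_{s-1}]$ with $\varphi_i$ first-order formulas (built-in $<,+,\times$) possibly containing $\overline X$; $Q^\star_L\mathrm{FO}(+,\times)$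 likewise with $Q^\star_L$. $\mathcal L\equiv\mathcal L'$ means over every string signature every sentence of either logic has an equivalent sentence of the other. *)

theory Defs
  imports Main
begin

text \<open>Strings over the alphabet (a_1,...,a_t) are encoded as nonempty lists of naturals
  below t (letter a_i is encoded as i-1).  Positions are 0..n-1.\<close>

definition strings :: "nat \<Rightarrow> nat list set" where
  "strings t = {w. w \<noteq> [] \<and> set w \<subseteq> {..<t}}"

datatype trm = TVar nat | TMin | TMax

datatype fo =
    FEq trm trm
  | FLess trm trm
  | FLetter nat trm          (* P_{a_(i+1)}(x) *)
  | FPlus trm trm trm
  | FTimes trm trm trm
  | FMem nat trm
  | FNot fo
  | FAnd fo fo
  | FOr fo fo
  | FEx nat fo
  | FAll nat fo

fun tval :: "nat list \<Rightarrow> (nat \<Rightarrow> nat) \<Rightarrow> trm \<Rightarrow> nat" where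
  "tval w \<sigma> (TVar i) = \<sigma> i"
| "tval w \<sigma> TMin = 0"
| "tval w \<sigma> TMax = length w - 1"

fun sat :: "nat list \<Rightarrow> (nat \<Rightarrow> nat) \<Rightarrow> (nat \<Rightarrow> nat set) \<Rightarrow> fo \<Rightarrow> bool" where
  "sat w \<sigma> \<Gamma> (FEq x y) = (tval w \<sigma> x = tval w \<sigma> y)"
| "sat w \<sigma> \<Gamma> (FLess x y) = (tval w \<sigma> x < tval w \<sigma> y)"
| "sat w \<sigma> \<Gamma> (FLetter a x) = (tval w \<sigma> x < length w \<and> w ! tval w \<sigma> x = a)"
| "sat w \<sigma> \<Gamma> (FPlus x y z) = (tval w \<sigma> x + tval w \<sigma> y = tval w \<sigma> z)"
| "sat w \<sigma> \<Gamma> (FTimes x y z) = (tval w \<sigma> x * tval w \<sigma> y = tval w \<sigma> z)"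
| "sat w \<sigma> \<Gamma> (FMem i x) = (tval w \<sigma> x \<in> \<Gamma> i)"
| "sat w \<sigma> \<Gamma> (FNot \<phi>) = (\<not> sat w \<sigma> \<Gamma> \<phi>)"
| "sat w \<sigma> \<Gamma> (FAnd \<phi> \<psi>) = (sat w \<sigma> \<Gamma> \<phi> \<and> sat w \<sigma> \<Gamma> \<psi>)"
| "sat w \<sigma> \<Gamma> (FOr \<phi> \<psi>) = (sat w \<sigma> \<Gamma> \<phi> \<or> sat w \<sigma> \<Gamma> \<psi>)"
| "sat w \<sigma> \<Gamma> (FEx i \<phi>) = (\<exists>j<length w. sat w (\<sigma>(i := j)) \<Gamma> \<phi>)"
| "sat w \<sigma> \<Gamma> (FAll i \<phi>) = (\<forall>j<length w. sat w (\<sigma>(i := j)) \<Gamma> \<phi>)"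

fun tvars :: "trm \<Rightarrow> nat set" where
  "tvars (TVar i) = {i}" | "tvars TMin = {}" | "tvars TMax = {}"

fun fv :: "fo \<Rightarrow> nat set" where
  "fv (FEq x y) = tvars x \<union> tvars y"
| "fv (FLess x y) = tvars x \<union> tvars y"
| "fv (FLetter a x) = tvars x"
| "fv (FPlus x y z) = tvars x \<union> tvars y \<union> tvars z"
| "fv (FTimes x y z) = tvars x \<union> tvars y \<union> tvars z"
| "fv (FMem i x) = tvars x"
| "fv (FNot \<phi>) = fv \<phi>"
| "fv (FAnd \<phi> \<psi>) = fv \<phi> \<union> fv \<psi>"
| "fv (FOr \<phi> \<psi>) = fv \<phi> \<union> fv \<psi>"
| "fv (FEx i \<phi>) = fv \<phi> - {i}"
| "fv (FAll i \<phi>) = fv \<phi> - {i}"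

fun sovars :: "fo \<Rightarrow> nat set" where
  "sovars (FMem i x) = {i}"
| "sovars (FNot \<phi>) = sovars \<phi>"
| "sovars (FAnd \<phi> \<psi>) = sovars \<phi> \<union> sovars \<psi>"
| "sovars (FOr \<phi> \<psi>) = sovars \<phi> \<union> sovars \<psi>"
| "sovars (FEx i \<phi>) = sovars \<phi>"
| "sovars (FAll i \<phi>) = sovars \<phi>"
| "sovars _ = {}"

fun letters :: "fo \<Rightarrow> nat set" where
  "letters (FLetter a x) = {a}"
| "letters (FNot \<phi>) = letters \<phi>"
| "letters (FAnd \<phi> \<psi>) = letters \<phi> \<union> letters \<psi>"
| "letters (FOr \<phi> \<psi>) = letters \<phi> \<union> letters \<psi>"
| "letters (FEx i \<phi>) = letters \<phi>"
| "letters (FAll i \<phi>) = letters \<phi>"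
| "letters _ = {}"

fun bitlists :: "nat \<Rightarrow> bool list list" where
  "bitlists 0 = [[]]"
| "bitlists (Suc N) = map (Cons False) (bitlists N) @ map (Cons True) (bitlists N)"

text \<open>Decoding a code of length n*k into the assignment (A_0,...,A_(k-1)).
  Interleaved code: s^1_0...s^k_0 s^1_1 ... ; concatenated code: s^1_0...s^1_(n-1) ... \<close>
definition assign_interleaved :: "nat \<Rightarrow> nat \<Rightarrow> bool list \<Rightarrow> nat \<Rightarrow> nat set" where
  "assign_interleaved k n c = (\<lambda>i. {j. j < n \<and> c ! (j * k + i)})"

definition assign_concat :: "nat \<Rightarrow> nat \<Rightarrow> bool list \<Rightarrow> nat \<Rightarrow> nat set" where
  "assign_concat k n c = (\<lambda>i. {j. j < n \<and> c ! (i * n + j)})"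

text \<open>Letter (0-based) produced at an assignment: least j with phi_j true, else the last letter.\<close>
definition letter_at :: "nat list \<Rightarrow> (nat \<Rightarrow> nat set) \<Rightarrow> fo list \<Rightarrow> nat" where
  "letter_at w \<Gamma> \<phi>s =
     (if \<exists>j<length \<phi>s. sat w (\<lambda>_. 0) \<Gamma> (\<phi>s ! j)
      then (LEAST j. j < length \<phi>s \<and> sat w (\<lambda>_. 0) \<Gamma> (\<phi>s ! j))
      else length \<phi>s)"

definition quant_word ::
  "(nat \<Rightarrow> nat \<Rightarrow> bool list \<Rightarrow> nat \<Rightarrow> nat set) \<Rightarrow> nat list \<Rightarrow> nat \<Rightarrow> fo list \<Rightarrow> nat list" where
  "quant_word dec w k \<phi>s =
     map (\<lambda>c. letter_at w (dec k (length w) c) \<phi>s) (bitlists (length w * k))"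

definition holds_Q1 :: "nat list set \<Rightarrow> nat list \<Rightarrow> nat \<Rightarrow> fo list \<Rightarrow> bool" where
  "holds_Q1 L w k \<phi>s = (quant_word assign_interleaved w k \<phi>s \<in> L)"

definition holds_Qstar :: "nat list set \<Rightarrow> nat list \<Rightarrow> nat \<Rightarrow> fo list \<Rightarrow> bool" where
  "holds_Qstar L w k \<phi>s = (quant_word assign_concat w k \<phi>s \<in> L)"

text \<open>Syntactic well-formedness of a sentence Q X_0..X_(k-1) [phi_1..phi_(s-1)]
  over the string signature with t letters.\<close>
definition qsentence :: "nat \<Rightarrow> nat \<Rightarrow> nat \<Rightarrow> fo list \<Rightarrow> bool" where
  "qsentence s t k \<phi>s \<longleftrightarrow> 1 \<le> k \<and> length \<phi>s = s - 1 \<and>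
     (\<forall>\<phi>\<in>set \<phi>s. fv \<phi> = {} \<and> sovars \<phi> \<subseteq> {..<k} \<and> letters \<phi> \<subseteq> {..<t})"

end

theory Submission imports Defs begin

text \<open>With the same k second-order variables both quantifiers run through the same bit strings
  in the same order and only read them differently: bit x k + i of a code says "x \<in> X_i" under
  the interleaved reading and "r \<in> X_q" under the concatenated one, where x k + i = q n + r with
  r < n.  Hence it suffices to replace each atom X_i(x) by a first-order formula that finds the
  q < k and r < n with x k + i = q n + r and asks X_q(r), and symmetrically.  Since positions are
  below n, the number x k + i is never named itself: the formula adds x to itself k times and
  then 1 i times, keeping the residue modulo n in a variable and choosing the carry q among the
  finitely many possibilities by a disjunction.\<close>

lemma div_mod_decomposition:
  fixes m n k :: nat
  assumes "m < k * n"
  shows "\<exists>q<k. \<exists>r<n. m = q * n + r"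
proof (intro exI conjI)
  have "0 < n" using assms by (cases n) auto
  then show "m mod n < n" by simp
  show "m div n < k" using assms by (rule less_mult_imp_div_less)
qed simp

lemma mult_add_less_mult:
  fixes x n a k :: nat
  assumes "x < n" "a < k"
  shows "x * k + a < n * k"
proof -
  have "x * k + a < Suc x * k" using assms(2) by simp
  also have "\<dots> \<le> n * k" using assms(1) by (intro mult_right_mono) auto
  finally show ?thesis .
qed

lemma add_with_carry:
  fixes m d c v n :: nat
  assumes "d \<le> n" "v < n"
  shows "(\<exists>u<n. (m = c * n + u \<and> u + d = v) \<or> (0 < c \<and> m = (c - 1) * n + u \<and> u + d = v + n))
    \<longleftrightarrow> m + d = c * n + v"
proof
  assume "m + d = c * n + v"
  show "\<exists>u<n. (m = c * n + u \<and> u + d = v) \<or> (0 < c \<and> m = (c - 1) * n + u \<and> u + d = v + n)"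
  proof (cases "d \<le> v")
    case True
    then show ?thesis using \<open>m + d = c * n + v\<close> assms by (intro exI[of _ "v - d"]) auto
  next
    case False
    then obtain c' where "c = Suc c'" using \<open>m + d = c * n + v\<close> by (cases c) auto
    then show ?thesis using \<open>m + d = c * n + v\<close> assms False by (intro exI[of _ "v + n - d"]) auto
  qed
next
  assume "\<exists>u<n. (m = c * n + u \<and> u + d = v) \<or> (0 < c \<and> m = (c - 1) * n + u \<and> u + d = v + n)"
  then show "m + d = c * n + v" by (cases c) auto
qed

definition FFalse :: fo where
  "FFalse = FLess TMin TMin"

lemma sat_FFalse [simp]: "\<not> sat w \<sigma> \<Gamma> FFalse"
  by (simp add: FFalse_def)

fun FDisj :: "fo list \<Rightarrow> fo" where
  "FDisj [] = FFalse"
| "FDisj (\<phi> # \<phi>s) = FOr \<phi> (FDisj \<phi>s)"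

lemma sat_FDisj [simp]: "sat w \<sigma> \<Gamma> (FDisj \<phi>s) \<longleftrightarrow> (\<exists>\<phi>\<in>set \<phi>s. sat w \<sigma> \<Gamma> \<phi>)"
  by (induction \<phi>s) auto

text \<open>In the formulas below the last argument b is the first variable free for use as a
  bound variable; all variables the formula speaks about are below b.\<close>

definition FSucc :: "nat \<Rightarrow> nat \<Rightarrow> nat \<Rightarrow> fo" where
  "FSucc e u b = FAnd (FLess (TVar e) (TVar u))
     (FNot (FEx b (FAnd (FLess (TVar e) (TVar b)) (FLess (TVar b) (TVar u)))))"

lemma sat_FSucc:
  assumes "e < b" "u < b" "\<sigma> u < length w"
  shows "sat w \<sigma> \<Gamma> (FSucc e u b) \<longleftrightarrow> \<sigma> u = Suc (\<sigma> e)"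
proof -
  have "sat w \<sigma> \<Gamma> (FSucc e u b) \<longleftrightarrow> \<sigma> e < \<sigma> u \<and> \<not> (\<exists>j<length w. \<sigma> e < j \<and> j < \<sigma> u)"
    using assms by (simp add: FSucc_def)
  also have "\<dots> \<longleftrightarrow> \<sigma> u = Suc (\<sigma> e)"
    using assms(3) by (metis Suc_lessI less_trans_Suc lessI not_less_eq)
  finally show ?thesis .
qed

definition FWrap :: "nat \<Rightarrow> nat \<Rightarrow> nat \<Rightarrow> nat \<Rightarrow> fo" where
  "FWrap u x v b = FEx b (FEx (Suc b) (FAnd (FPlus (TVar x) (TVar b) TMax)
     (FAnd (FPlus (TVar v) (TVar b) (TVar (Suc b))) (FSucc (Suc b) u (Suc (Suc b))))))"

lemma sat_FWrap:
  assumes "w \<noteq> []" "\<forall>i. \<sigma> i < length w" "u < b" "x < b" "v < b"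
  shows "sat w \<sigma> \<Gamma> (FWrap u x v b) \<longleftrightarrow> \<sigma> u + \<sigma> x = \<sigma> v + length w"
proof -
  have succ: "sat w (\<sigma>(b := d, Suc b := e)) \<Gamma> (FSucc (Suc b) u (Suc (Suc b))) \<longleftrightarrow> \<sigma> u = Suc e"
    for d e
    using assms by (subst sat_FSucc) auto
  have "sat w \<sigma> \<Gamma> (FWrap u x v b) \<longleftrightarrow>
      (\<exists>d<length w. \<exists>e<length w. \<sigma> x + d = length w - 1 \<and> \<sigma> v + d = e \<and> \<sigma> u = Suc e)"
    using assms(3-5) by (simp add: FWrap_def succ)
  also have "\<dots> \<longleftrightarrow> \<sigma> u + \<sigma> x = \<sigma> v + length w"
  proof
    assume "\<sigma> u + \<sigma> x = \<sigma> v + length w"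
    then show "\<exists>d<length w. \<exists>e<length w. \<sigma> x + d = length w - 1 \<and> \<sigma> v + d = e \<and> \<sigma> u = Suc e"
      using assms(2)[rule_format, of x] assms(2)[rule_format, of u]
      by (intro exI[of _ "length w - 1 - \<sigma> x"] exI[of _ "\<sigma> u - 1"]) auto
  qed (use assms(1) in auto)
  finally show ?thesis .
qed

text \<open>The carry c = x j div n may exceed n, so it is a parameter of the formula rather than a
  variable; each step adds x and either wraps around n (decrementing the carry) or not.\<close>

fun FMulMod :: "nat \<Rightarrow> nat \<Rightarrow> nat \<Rightarrow> nat \<Rightarrow> nat \<Rightarrow> fo" where
  "FMulMod 0 c x v b = (if c = 0 then FEq (TVar v) TMin else FFalse)"
| "FMulMod (Suc j) c x v b = FEx b (FOr
     (FAnd (FMulMod j c x b (Suc b)) (FPlus (TVar b) (TVar x) (TVar v)))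
     (if c = 0 then FFalse else FAnd (FMulMod j (c - 1) x b (Suc b)) (FWrap b x v (Suc b))))"

lemma sat_FMulMod:
  assumes "w \<noteq> []" "\<forall>i. \<sigma> i < length w" "x < b" "v < b"
  shows "sat w \<sigma> \<Gamma> (FMulMod j c x v b) \<longleftrightarrow> \<sigma> x * j = c * length w + \<sigma> v"
  using assms(2-4)
proof (induction j arbitrary: c \<sigma> v b)
  case 0
  then show ?case using assms(1) by simp
next
  case (Suc j)
  let ?n = "length w"
  have IH: "sat w (\<sigma>(b := u)) \<Gamma> (FMulMod j c' x b (Suc b)) \<longleftrightarrow> \<sigma> x * j = c' * ?n + u"
    if "u < ?n" for u c'
    using Suc.IH[of "\<sigma>(b := u)" "Suc b" b c'] Suc.prems that by (simp add: fun_upd_def)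
  have wrap: "sat w (\<sigma>(b := u)) \<Gamma> (FWrap b x v (Suc b)) \<longleftrightarrow> u + \<sigma> x = \<sigma> v + ?n"
    if "u < ?n" for u
    using sat_FWrap[OF assms(1), of "\<sigma>(b := u)" b "Suc b" x v \<Gamma>] Suc.prems that by auto
  have "sat w \<sigma> \<Gamma> (FMulMod (Suc j) c x v b) \<longleftrightarrow>
      (\<exists>u<?n. (\<sigma> x * j = c * ?n + u \<and> u + \<sigma> x = \<sigma> v)
        \<or> (0 < c \<and> \<sigma> x * j = (c - 1) * ?n + u \<and> u + \<sigma> x = \<sigma> v + ?n))"
    using Suc.prems by (auto simp: IH wrap)
  also have "\<dots> \<longleftrightarrow> \<sigma> x * j + \<sigma> x = c * ?n + \<sigma> v"
    using Suc.prems(1) by (intro add_with_carry) (auto intro: less_imp_le)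
  finally show ?case by (simp add: add.commute)
qed

fun FAffineMod :: "nat \<Rightarrow> nat \<Rightarrow> nat \<Rightarrow> nat \<Rightarrow> nat \<Rightarrow> nat \<Rightarrow> fo" where
  "FAffineMod k 0 c x v b = FMulMod k c x v b"
| "FAffineMod k (Suc i) c x v b = FEx b (FOr
     (FAnd (FAffineMod k i c x b (Suc b)) (FSucc b v (Suc b)))
     (if c = 0 then FFalse
      else FAnd (FAffineMod k i (c - 1) x b (Suc b)) (FAnd (FEq (TVar b) TMax) (FEq (TVar v) TMin))))"

lemma sat_FAffineMod:
  assumes "w \<noteq> []" "\<forall>i. \<sigma> i < length w" "x < b" "v < b"
  shows "sat w \<sigma> \<Gamma> (FAffineMod k i c x v b) \<longleftrightarrow> \<sigma> x * k + i = c * length w + \<sigma> v"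
  using assms(2-4)
proof (induction i arbitrary: c \<sigma> v b)
  case 0
  then show ?case using sat_FMulMod[OF assms(1)] by simp
next
  case (Suc i)
  let ?n = "length w"
  have IH: "sat w (\<sigma>(b := u)) \<Gamma> (FAffineMod k i c' x b (Suc b)) \<longleftrightarrow> \<sigma> x * k + i = c' * ?n + u"
    if "u < ?n" for u c'
    using Suc.IH[of "\<sigma>(b := u)" "Suc b" b c'] Suc.prems that by (simp add: fun_upd_def)
  have succ: "sat w (\<sigma>(b := u)) \<Gamma> (FSucc b v (Suc b)) \<longleftrightarrow> u + 1 = \<sigma> v" for u
    using Suc.prems by (subst sat_FSucc) auto
  have wrap: "u = ?n - 1 \<and> \<sigma> v = 0 \<longleftrightarrow> u + 1 = \<sigma> v + ?n" if "u < ?n" for u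
    using that Suc.prems(1) by auto
  have "sat w \<sigma> \<Gamma> (FAffineMod k (Suc i) c x v b) \<longleftrightarrow>
      (\<exists>u<?n. (\<sigma> x * k + i = c * ?n + u \<and> u + 1 = \<sigma> v)
        \<or> (0 < c \<and> \<sigma> x * k + i = (c - 1) * ?n + u \<and> u + 1 = \<sigma> v + ?n))"
    using Suc.prems by (auto simp: IH succ wrap[symmetric])
  also have "\<dots> \<longleftrightarrow> \<sigma> x * k + i + 1 = c * ?n + \<sigma> v"
    using Suc.prems(1) assms(1) by (intro add_with_carry) (auto simp: Suc_leI)
  finally show ?case by simp
qed

lemma fv_FDisj: "fv (FDisj \<phi>s) = \<Union> (fv ` set \<phi>s)"
  and sovars_FDisj: "sovars (FDisj \<phi>s) = \<Union> (sovars ` set \<phi>s)"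
  and letters_FDisj: "letters (FDisj \<phi>s) = \<Union> (letters ` set \<phi>s)"
  by (induction \<phi>s) (auto simp: FFalse_def)

lemma fv_FSucc: "fv (FSucc e u b) \<subseteq> {e, u}"
  by (auto simp: FSucc_def)

lemma fv_FWrap: "fv (FWrap u x v b) \<subseteq> {u, x, v}"
  using fv_FSucc[of "Suc b" u "Suc (Suc b)"] by (auto simp: FWrap_def)

lemma fv_FMulMod: "fv (FMulMod j c x v b) \<subseteq> {x, v}"
proof (induction j arbitrary: c v b)
  case (Suc j)
  show ?case
    using Suc.IH[of c b "Suc b"] Suc.IH[of "c - 1" b "Suc b"] fv_FWrap[of b x v "Suc b"]
    by (auto simp: FFalse_def)
qed (simp add: FFalse_def)

lemma fv_FAffineMod: "fv (FAffineMod k i c x v b) \<subseteq> {x, v}"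
proof (induction i arbitrary: c v b)
  case (Suc i)
  show ?case
    using Suc.IH[of c b "Suc b"] Suc.IH[of "c - 1" b "Suc b"] fv_FSucc[of b v "Suc b"]
    by (auto simp: FFalse_def)
qed (simp add: fv_FMulMod)

lemma sovars_letters_FAffineMod:
  "sovars (FAffineMod k i c x v b) = {}" "letters (FAffineMod k i c x v b) = {}"
proof -
  have "sovars (FMulMod j c x v b) = {} \<and> letters (FMulMod j c x v b) = {}" for j c v b
    by (induction j arbitrary: c v b) (simp_all add: FFalse_def FWrap_def FSucc_def)
  then show "sovars (FAffineMod k i c x v b) = {}" "letters (FAffineMod k i c x v b) = {}"
    by (induction i arbitrary: c v b) (simp_all add: FFalse_def FSucc_def)
qed

definition FReindex :: "nat \<Rightarrow> (nat \<Rightarrow> fo) \<Rightarrow> nat \<Rightarrow> trm \<Rightarrow> fo" where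
  "FReindex k R B t = FEx B (FAnd (FEq (TVar B) t)
     (FDisj (map (\<lambda>p. FEx (Suc B) (FAnd (R p) (FMem p (TVar (Suc B))))) [0..<k])))"

lemma sat_FReindex:
  assumes "w \<noteq> []" "\<forall>i. \<sigma> i < length w" "tvars t \<subseteq> {..<B}"
    and R: "\<And>p \<sigma>'. p < k \<Longrightarrow> \<forall>i. \<sigma>' i < length w \<Longrightarrow>
      sat w \<sigma>' \<Gamma> (R p) \<longleftrightarrow> rel p (\<sigma>' B) (\<sigma>' (Suc B))"
  shows "sat w \<sigma> \<Gamma> (FReindex k R B t) \<longleftrightarrow>
    (\<exists>p<k. \<exists>y<length w. rel p (tval w \<sigma> t) y \<and> y \<in> \<Gamma> p)"
proof -
  have tval_upd: "tval w (\<sigma>(B := x)) t = tval w \<sigma> t" for x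
    using assms(3) by (cases t) auto
  have tval_less: "tval w \<sigma> t < length w"
    using assms(1,2) by (cases t) auto
  have rel: "sat w (\<sigma>(B := x, Suc B := y)) \<Gamma> (R p) \<longleftrightarrow> rel p x y"
    if "p < k" "x < length w" "y < length w" for p x y
    using R[of p "\<sigma>(B := x, Suc B := y)"] assms(2) that by auto
  have "sat w \<sigma> \<Gamma> (FReindex k R B t) \<longleftrightarrow> (\<exists>p<k. \<exists>y<length w.
      sat w (\<sigma>(B := tval w \<sigma> t, Suc B := y)) \<Gamma> (R p) \<and> y \<in> \<Gamma> p)"
    using tval_less by (auto simp: FReindex_def tval_upd)
  then show ?thesis
    using tval_less rel by blast
qed

lemma syntax_FReindex:
  assumes "\<And>p. fv (R p) \<subseteq> {B, Suc B}" "\<And>p. sovars (R p) = {}" "\<And>p. letters (R p) = {}"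
  shows "fv (FReindex k R B t) \<subseteq> tvars t" "sovars (FReindex k R B t) \<subseteq> {..<k}"
    "letters (FReindex k R B t) = {}"
  using assms by (fastforce simp: FReindex_def fv_FDisj sovars_FDisj letters_FDisj)+

definition FMem_interleaved :: "nat \<Rightarrow> nat \<Rightarrow> nat \<Rightarrow> trm \<Rightarrow> fo" where
  "FMem_interleaved k B a t = FReindex k (\<lambda>q. FAffineMod k a q B (Suc B) (Suc (Suc B))) B t"

definition FMem_concat :: "nat \<Rightarrow> nat \<Rightarrow> nat \<Rightarrow> trm \<Rightarrow> fo" where
  "FMem_concat k B q t = FReindex k (\<lambda>a. FAffineMod k a q (Suc B) B (Suc (Suc B))) B t"

lemma syntax_FMem_interleaved:
  "fv (FMem_interleaved k B a t) \<subseteq> tvars t" "sovars (FMem_interleaved k B a t) \<subseteq> {..<k}"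
  "letters (FMem_interleaved k B a t) = {}"
  unfolding FMem_interleaved_def
  by (rule syntax_FReindex; use fv_FAffineMod sovars_letters_FAffineMod in auto)+

lemma syntax_FMem_concat:
  "fv (FMem_concat k B q t) \<subseteq> tvars t" "sovars (FMem_concat k B q t) \<subseteq> {..<k}"
  "letters (FMem_concat k B q t) = {}"
proof -
  have "fv (FAffineMod k a q (Suc B) B (Suc (Suc B))) \<subseteq> {B, Suc B}" for a
    using fv_FAffineMod[of k a q "Suc B" B "Suc (Suc B)"] by auto
  then show "fv (FMem_concat k B q t) \<subseteq> tvars t" "sovars (FMem_concat k B q t) \<subseteq> {..<k}"
    "letters (FMem_concat k B q t) = {}"
    unfolding FMem_concat_def by (rule syntax_FReindex; simp add: sovars_letters_FAffineMod)+
qed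

lemma sat_FMem_interleaved:
  assumes "w \<noteq> []" "\<forall>i. \<sigma> i < length w" "tvars t \<subseteq> {..<B}" "a < k"
  shows "sat w \<sigma> (assign_concat k (length w) c) (FMem_interleaved k B a t) \<longleftrightarrow>
    tval w \<sigma> t \<in> assign_interleaved k (length w) c a"
proof -
  let ?n = "length w" and ?x = "tval w \<sigma> t"
  have x: "?x < ?n" using assms(1,2) by (cases t) auto
  have "sat w \<sigma> (assign_concat k ?n c) (FMem_interleaved k B a t) \<longleftrightarrow>
      (\<exists>q<k. \<exists>r<?n. ?x * k + a = q * ?n + r \<and> c ! (q * ?n + r))"
    unfolding FMem_interleaved_def
    by (subst sat_FReindex[where rel = "\<lambda>q x r. x * k + a = q * ?n + r"])
      (use assms in \<open>auto simp: sat_FAffineMod assign_concat_def\<close>)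
  also have "\<dots> \<longleftrightarrow> c ! (?x * k + a)"
    using div_mod_decomposition[of "?x * k + a" k ?n] mult_add_less_mult[OF x assms(4)]
    by (auto simp: mult.commute)
  finally show ?thesis using x by (simp add: assign_interleaved_def)
qed

lemma sat_FMem_concat:
  assumes "w \<noteq> []" "\<forall>i. \<sigma> i < length w" "tvars t \<subseteq> {..<B}" "q < k"
  shows "sat w \<sigma> (assign_interleaved k (length w) c) (FMem_concat k B q t) \<longleftrightarrow>
    tval w \<sigma> t \<in> assign_concat k (length w) c q"
proof -
  let ?n = "length w" and ?r = "tval w \<sigma> t"
  have r: "?r < ?n" using assms(1,2) by (cases t) auto
  have "sat w \<sigma> (assign_interleaved k ?n c) (FMem_concat k B q t) \<longleftrightarrow>
      (\<exists>a<k. \<exists>x<?n. x * k + a = q * ?n + ?r \<and> c ! (x * k + a))"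
    unfolding FMem_concat_def
    by (subst sat_FReindex[where rel = "\<lambda>a r x. x * k + a = q * ?n + r"])
      (use assms in \<open>auto simp: sat_FAffineMod assign_interleaved_def\<close>)
  also have "\<dots> \<longleftrightarrow> c ! (q * ?n + ?r)"
    using div_mod_decomposition[of "q * ?n + ?r" ?n k] mult_add_less_mult[OF assms(4) r]
    by (auto simp: mult.commute)
  finally show ?thesis using r by (simp add: assign_concat_def)
qed

fun subst_mem :: "(nat \<Rightarrow> trm \<Rightarrow> fo) \<Rightarrow> fo \<Rightarrow> fo" where
  "subst_mem f (FMem i x) = f i x"
| "subst_mem f (FNot \<phi>) = FNot (subst_mem f \<phi>)"
| "subst_mem f (FAnd \<phi> \<psi>) = FAnd (subst_mem f \<phi>) (subst_mem f \<psi>)"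
| "subst_mem f (FOr \<phi> \<psi>) = FOr (subst_mem f \<phi>) (subst_mem f \<psi>)"
| "subst_mem f (FEx i \<phi>) = FEx i (subst_mem f \<phi>)"
| "subst_mem f (FAll i \<phi>) = FAll i (subst_mem f \<phi>)"
| "subst_mem f \<phi> = \<phi>"

text \<open>A bound on the first-order variables occurring in membership atoms; variables from this
  bound on are free for the bound variables of the substituted formulas.\<close>

fun mem_bound :: "fo \<Rightarrow> nat" where
  "mem_bound (FMem i (TVar j)) = Suc j"
| "mem_bound (FNot \<phi>) = mem_bound \<phi>"
| "mem_bound (FAnd \<phi> \<psi>) = max (mem_bound \<phi>) (mem_bound \<psi>)"
| "mem_bound (FOr \<phi> \<psi>) = max (mem_bound \<phi>) (mem_bound \<psi>)"
| "mem_bound (FEx i \<phi>) = mem_bound \<phi>"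
| "mem_bound (FAll i \<phi>) = mem_bound \<phi>"
| "mem_bound \<phi> = 0"

lemma sat_subst_mem:
  assumes "\<And>i t \<sigma>. i \<in> sovars \<phi> \<Longrightarrow> tvars t \<subseteq> {..<B} \<Longrightarrow> \<forall>v. \<sigma> v < length w \<Longrightarrow>
      sat w \<sigma> \<Gamma>' (f i t) \<longleftrightarrow> tval w \<sigma> t \<in> \<Gamma> i"
    and "mem_bound \<phi> \<le> B" "\<forall>v. \<sigma> v < length w"
  shows "sat w \<sigma> \<Gamma>' (subst_mem f \<phi>) \<longleftrightarrow> sat w \<sigma> \<Gamma> \<phi>"
  using assms
proof (induction \<phi> arbitrary: \<sigma>)
  case (FMem i t)
  then show ?case by (cases t) auto
next
  case (FEx i \<phi>)
  have "sat w (\<sigma>(i := j)) \<Gamma>' (subst_mem f \<phi>) \<longleftrightarrow> sat w (\<sigma>(i := j)) \<Gamma> \<phi>" if "j < length w" for j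
    by (rule FEx.IH) (use FEx.prems that in auto)
  then show ?case by auto
next
  case (FAll i \<phi>)
  have "sat w (\<sigma>(i := j)) \<Gamma>' (subst_mem f \<phi>) \<longleftrightarrow> sat w (\<sigma>(i := j)) \<Gamma> \<phi>" if "j < length w" for j
    by (rule FAll.IH) (use FAll.prems that in auto)
  then show ?case by auto
qed auto

lemma fv_subst_mem: "(\<And>i t. fv (f i t) \<subseteq> tvars t) \<Longrightarrow> fv (subst_mem f \<phi>) \<subseteq> fv \<phi>"
  by (induction \<phi>) auto

lemma sovars_subst_mem: "(\<And>i t. sovars (f i t) \<subseteq> S) \<Longrightarrow> sovars (subst_mem f \<phi>) \<subseteq> S"
  by (induction \<phi>) auto

lemma letters_subst_mem: "(\<And>i t. letters (f i t) = {}) \<Longrightarrow> letters (subst_mem f \<phi>) \<subseteq> letters \<phi>"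
  by (induction \<phi>) auto

lemma letter_at_cong:
  assumes "length \<psi>s = length \<phi>s"
    and "\<And>j. j < length \<phi>s \<Longrightarrow> sat w (\<lambda>_. 0) \<Gamma> (\<psi>s ! j) \<longleftrightarrow> sat w (\<lambda>_. 0) \<Gamma>' (\<phi>s ! j)"
  shows "letter_at w \<Gamma> \<psi>s = letter_at w \<Gamma>' \<phi>s"
proof -
  have "(\<lambda>j. j < length \<phi>s \<and> sat w (\<lambda>_. 0) \<Gamma> (\<psi>s ! j))
      = (\<lambda>j. j < length \<phi>s \<and> sat w (\<lambda>_. 0) \<Gamma>' (\<phi>s ! j))"
    using assms(2) by auto
  then show ?thesis
    unfolding letter_at_def assms(1) by (simp only: Ex_def)
qed

lemma quant_word_subst_mem:
  fixes dec dec' :: "nat \<Rightarrow> nat \<Rightarrow> bool list \<Rightarrow> nat \<Rightarrow> nat set"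
    and f :: "nat \<Rightarrow> nat \<Rightarrow> trm \<Rightarrow> fo"
  assumes q: "qsentence s t k \<phi>s"
    and fv_f: "\<And>B i x. fv (f B i x) \<subseteq> tvars x"
    and sovars_f: "\<And>B i x. sovars (f B i x) \<subseteq> {..<k}"
    and letters_f: "\<And>B i x. letters (f B i x) = {}"
    and sat_f: "\<And>w \<sigma> c B i x. w \<noteq> [] \<Longrightarrow> \<forall>v. \<sigma> v < length w \<Longrightarrow> i < k \<Longrightarrow>
      tvars x \<subseteq> {..<B} \<Longrightarrow>
      sat w \<sigma> (dec' k (length w) c) (f B i x) \<longleftrightarrow> tval w \<sigma> x \<in> dec k (length w) c i"
  shows "\<exists>\<psi>s. qsentence s t k \<psi>s \<and> (\<forall>w\<in>strings t. quant_word dec w k \<phi>s = quant_word dec' w k \<psi>s)"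
proof (intro exI conjI ballI)
  define B where "B = sum_list (map mem_bound \<phi>s)"
  have B: "mem_bound \<phi> \<le> B" if "\<phi> \<in> set \<phi>s" for \<phi>
    using member_le_sum_list[of "mem_bound \<phi>" "map mem_bound \<phi>s"] that by (simp add: B_def)
  let ?\<psi>s = "map (subst_mem (f B)) \<phi>s"
  show "qsentence s t k ?\<psi>s"
    using q fv_subst_mem[OF fv_f] sovars_subst_mem[OF sovars_f] letters_subst_mem[OF letters_f]
    unfolding qsentence_def by fastforce
  fix w assume "w \<in> strings t"
  then have w: "w \<noteq> []" by (simp add: strings_def)
  have "letter_at w (dec k (length w) c) \<phi>s = letter_at w (dec' k (length w) c) ?\<psi>s" for c
  proof (rule letter_at_cong[symmetric])
    fix j assume j: "j < length \<phi>s"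
    have sovars: "sovars (\<phi>s ! j) \<subseteq> {..<k}" and bound: "mem_bound (\<phi>s ! j) \<le> B"
      using j q B unfolding qsentence_def by auto
    show "sat w (\<lambda>_. 0) (dec' k (length w) c) (?\<psi>s ! j) \<longleftrightarrow>
        sat w (\<lambda>_. 0) (dec k (length w) c) (\<phi>s ! j)"
      unfolding nth_map[OF j] by (rule sat_subst_mem) (use sat_f[OF w] w sovars bound in auto)
  qed simp
  then show "quant_word dec w k \<phi>s = quant_word dec' w k ?\<psi>s"
    by (simp add: quant_word_def)
qed

text \<open>The translation leaves the number of second-order variables and the produced word
  unchanged.\<close>

theorem proposition2p7:
  fixes L :: "nat list set" and s t :: nat
  assumes "1 \<le> s" and "L \<subseteq> lists {..<s}"
  shows "(\<forall>k \<phi>s. qsentence s t k \<phi>s \<longrightarrow>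
            (\<exists>k' \<psi>s. qsentence s t k' \<psi>s \<and>
               (\<forall>w\<in>strings t. holds_Q1 L w k \<phi>s \<longleftrightarrow> holds_Qstar L w k' \<psi>s)))
       \<and> (\<forall>k \<psi>s. qsentence s t k \<psi>s \<longrightarrow>
            (\<exists>k' \<phi>s. qsentence s t k' \<phi>s \<and>
               (\<forall>w\<in>strings t. holds_Qstar L w k \<psi>s \<longleftrightarrow> holds_Q1 L w k' \<phi>s)))"
proof (intro conjI allI impI)
  fix k \<phi>s assume "qsentence s t k \<phi>s"
  then have "\<exists>\<psi>s. qsentence s t k \<psi>s \<and>
      (\<forall>w\<in>strings t. quant_word assign_interleaved w k \<phi>s = quant_word assign_concat w k \<psi>s)"
    by (rule quant_word_subst_mem[where f = "FMem_interleaved k"])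
      (auto simp: syntax_FMem_interleaved sat_FMem_interleaved)
  then show "\<exists>k' \<psi>s. qsentence s t k' \<psi>s \<and>
      (\<forall>w\<in>strings t. holds_Q1 L w k \<phi>s \<longleftrightarrow> holds_Qstar L w k' \<psi>s)"
    unfolding holds_Q1_def holds_Qstar_def by metis
next
  fix k \<psi>s assume "qsentence s t k \<psi>s"
  then have "\<exists>\<phi>s. qsentence s t k \<phi>s \<and>
      (\<forall>w\<in>strings t. quant_word assign_concat w k \<psi>s = quant_word assign_interleaved w k \<phi>s)"
    by (rule quant_word_subst_mem[where f = "FMem_concat k"])
      (auto simp: syntax_FMem_concat sat_FMem_concat)
  then show "\<exists>k' \<phi>s. qsentence s t k' \<phi>s \<and>
      (\<forall>w\<in>strings t. holds_Qstar L w k \<psi>s \<longleftrightarrow> holds_Q1 L w k' \<phi>s)"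
    unfolding holds_Q1_def holds_Qstar_def by metis
qed

end
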